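(* For each $y\in\mathbb{Z}_p$, the map $S^y:C(\mathbb{Z}_p,\mathbb{C}_p)\to C(\mathbb{Z}_p,\mathbb{C}_p)$ is an isometric automorphism of the $\mathbb{C}_p$-Banach space $C(\mathbb{Z}_p,\mathbb{C}_p)$ (i.e. $\|S^y(\phi)\|=\|\phi\|$ for all $\phi$), with inverse $S^{-y}$.
   Context: Fix a prime $p$. $\mathbb{C}_p$ denotes the completion of an algebraic closure of $\mathbb{Q}_p$, with absolute value $|\cdot|$ normalized by $|p|=1/p$. $C(\mathbb{Z}_p,\mathbb{C}_p)$ is the $\mathbb{C}_p$-Banach space of continuous functions $\mathbb{Z}_p\to\mathbb{C}_p$ with the sup-norm $\|\cdot\|$. For $n\in\mathbb{Z}_{\ge0}$ and $x\in\mathbb{Z}_p$, $\binom{x}{n}=x(x-1)\cdots(x-n+1)/n!$. For $y\in\mathbb{Z}_p$ and $\phi\in C(\mathbb{Z}_p,\mathbb{C}_p)$ define $S^y(\phi)\in C(\mathbb{Z}_p,\mathbb{C}_p)$ by $S^y(\phi)(x)=\sum_{k\ge0}(-1)^k k!\binom yk\binom xk\phi(x-k)$ (the series converges uniformly in $(x,y)$). *)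

theory Defs
  imports "HOL-Computational_Algebra.Polynomial"
begin

text \<open>C_p is modelled abstractly: a field 'a of characteristic 0 with an absolute
value absv that is non-archimedean, satisfies absv p = 1/p, is complete,
algebraically closed, and in which the elements algebraic over Q are dense.
This characterises the completion of an algebraic closure of Q_p
(i.e. C_p) up to isometric isomorphism.\<close>

definition nonarch_absv :: "('a::field \<Rightarrow> real) \<Rightarrow> bool" where
  "nonarch_absv absv \<longleftrightarrow>
     (\<forall>x. absv x \<ge> 0) \<and> (\<forall>x. absv x = 0 \<longleftrightarrow> x = 0) \<and>
     (\<forall>x y. absv (x * y) = absv x * absv y) \<and>
     (\<forall>x y. absv (x + y) \<le> max (absv x) (absv y))"

definition absv_cauchy :: "('a::field \<Rightarrow> real) \<Rightarrow> (nat \<Rightarrow> 'a) \<Rightarrow> bool" where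
  "absv_cauchy absv s \<longleftrightarrow>
     (\<forall>e>0. \<exists>N. \<forall>m\<ge>N. \<forall>n\<ge>N. absv (s m - s n) < e)"

definition absv_tendsto :: "('a::field \<Rightarrow> real) \<Rightarrow> (nat \<Rightarrow> 'a) \<Rightarrow> 'a \<Rightarrow> bool" where
  "absv_tendsto absv s l \<longleftrightarrow> (\<forall>e>0. \<exists>N. \<forall>n\<ge>N. absv (s n - l) < e)"

definition is_Cp :: "nat \<Rightarrow> ('a::field_char_0 \<Rightarrow> real) \<Rightarrow> bool" where
  "is_Cp p absv \<longleftrightarrow>
     prime p \<and> nonarch_absv absv \<and>
     absv (of_nat p) = 1 / real p \<and>
     (\<forall>s. absv_cauchy absv s \<longrightarrow> (\<exists>l. absv_tendsto absv s l)) \<and>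
     (\<forall>q :: 'a poly. degree q > 0 \<longrightarrow> (\<exists>x. poly q x = 0)) \<and>
     (\<forall>x. \<forall>e>0. \<exists>z. (\<exists>q :: int poly. q \<noteq> 0 \<and> poly (map_poly of_int q) z = 0)
                     \<and> absv (x - z) < e)"

definition Zp :: "('a::field \<Rightarrow> real) \<Rightarrow> 'a set" where
  "Zp absv = {x. \<forall>e>0. \<exists>n::nat. absv (x - of_nat n) < e}"

definition cont_on_Zp :: "('a::field \<Rightarrow> real) \<Rightarrow> ('a \<Rightarrow> 'a) \<Rightarrow> bool" where
  "cont_on_Zp absv f \<longleftrightarrow>
     (\<forall>x\<in>Zp absv. \<forall>e>0. \<exists>d>0. \<forall>x'\<in>Zp absv.
        absv (x' - x) < d \<longrightarrow> absv (f x' - f x) < e)"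

definition sup_norm :: "('a::field \<Rightarrow> real) \<Rightarrow> ('a \<Rightarrow> 'a) \<Rightarrow> real" where
  "sup_norm absv f = Sup ((\<lambda>x. absv (f x)) ` Zp absv)"

definition absv_suminf :: "('a::field \<Rightarrow> real) \<Rightarrow> (nat \<Rightarrow> 'a) \<Rightarrow> 'a" where
  "absv_suminf absv f = (THE s. absv_tendsto absv (\<lambda>n. \<Sum>k<n. f k) s)"

definition S_op :: "('a::field_char_0 \<Rightarrow> real) \<Rightarrow> 'a \<Rightarrow> ('a \<Rightarrow> 'a) \<Rightarrow> 'a \<Rightarrow> 'a" where
  "S_op absv y phi x = absv_suminf absv
     (\<lambda>k. (-1)^k * fact k * (y gchoose k) * (x gchoose k) * phi (x - of_nat k))"

end

theory Submission
  imports Defs "HOL-Computational_Algebra.Formal_Power_Series" "HOL-Analysis.Abstract_Metric_Spaces"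
begin

(* S^y is the series with coefficients c_k(y, x) = (-1)^k k! binom(y, k) binom(x, k).
   On Z_p the binomial coefficients have absolute value at most 1 and |k!| tends to 0,
   so the series converges uniformly, S^y does not increase the sup-norm, and S^y phi is
   continuous as a uniform limit of continuous partial sums.  By Vandermonde's identity the
   coefficients compose by convolution, sum_{k+j=n} c_k(z, x) c_j(y, x - k) = c_n(z + y, x);
   rearranging the double series (harmless, as its terms tend to 0 in an ultrametric) gives
   S^z S^y = S^(z+y), and S^0 = id.  Hence S^(-y) inverts S^y, and as both are
   norm-nonincreasing, S^y is an isometry.  Of the properties of C_p only completeness, the
   ultrametric inequality and |p| = 1/p are used. *)

definition S_coeff :: "'a::field_char_0 \<Rightarrow> 'a \<Rightarrow> nat \<Rightarrow> 'a" where
  "S_coeff y x k = (-1) ^ k * fact k * (y gchoose k) * (x gchoose k)"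

lemma S_coeff_0_left: "S_coeff 0 x k = (if k = 0 then 1 else 0)"
  by (simp add: S_coeff_def gbinomial_0_left)

lemma fact_gbinomial_mult_shift:
  fixes x :: "'a::field_char_0"
  shows "(fact k * (x gchoose k)) * (fact j * ((x - of_nat k) gchoose j))
    = fact (k + j) * (x gchoose (k + j))"
proof -
  have "(\<Prod>i = k..<k + j. x - of_nat i) = (\<Prod>i = 0..<j. x - of_nat k - of_nat i)"
    using prod.shift_bounds_nat_ivl[of "\<lambda>i. x - of_nat i" 0 k j] by (simp add: algebra_simps)
  moreover have "(\<Prod>i = 0..<k + j. x - of_nat i)
      = (\<Prod>i = 0..<k. x - of_nat i) * (\<Prod>i = k..<k + j. x - of_nat i)"
    by (simp add: prod.atLeastLessThan_concat)
  ultimately show ?thesis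
    by (simp only: gbinomial_mult_fact)
qed

lemma S_coeff_convolution:
  "(\<Sum>k\<le>n. S_coeff z x k * S_coeff y (x - of_nat k) (n - k)) = S_coeff (z + y) x n"
proof -
  have "S_coeff z x k * S_coeff y (x - of_nat k) (n - k)
      = (-1) ^ n * (fact n * (x gchoose n)) * ((z gchoose k) * (y gchoose (n - k)))" if "k \<le> n" for k
  proof -
    have "S_coeff z x k * S_coeff y (x - of_nat k) (n - k)
        = ((-1) ^ k * (-1) ^ (n - k)) * ((fact k * (x gchoose k)) * (fact (n - k) * ((x - of_nat k) gchoose (n - k))))
          * ((z gchoose k) * (y gchoose (n - k)))"
      by (simp add: S_coeff_def algebra_simps)
    also have "\<dots> = (-1) ^ n * (fact n * (x gchoose n)) * ((z gchoose k) * (y gchoose (n - k)))"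
      using that by (simp only: fact_gbinomial_mult_shift power_add[symmetric] le_add_diff_inverse)
    finally show ?thesis .
  qed
  then have "(\<Sum>k\<le>n. S_coeff z x k * S_coeff y (x - of_nat k) (n - k))
      = (-1) ^ n * (fact n * (x gchoose n)) * (\<Sum>k\<le>n. (z gchoose k) * (y gchoose (n - k)))"
    by (simp add: sum_distrib_left)
  also have "\<dots> = S_coeff (z + y) x n"
    using gbinomial_Vandermonde[of z y n] by (simp add: S_coeff_def atMost_atLeast0 algebra_simps)
  finally show ?thesis .
qed

lemma S_coeff_triangle_sum:
  "(\<Sum>n<L. \<Sum>k\<le>n. S_coeff z x k * S_coeff y (x - of_nat k) (n - k) * phi (x - of_nat (k + (n - k))))
    = (\<Sum>n<L. S_coeff (z + y) x n * phi (x - of_nat n))"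
proof (rule sum.cong)
  fix n
  have "(\<Sum>k\<le>n. S_coeff z x k * S_coeff y (x - of_nat k) (n - k) * phi (x - of_nat (k + (n - k))))
      = (\<Sum>k\<le>n. S_coeff z x k * S_coeff y (x - of_nat k) (n - k)) * phi (x - of_nat n)"
    by (simp add: sum_distrib_right)
  then show "(\<Sum>k\<le>n. S_coeff z x k * S_coeff y (x - of_nat k) (n - k) * phi (x - of_nat (k + (n - k))))
      = S_coeff (z + y) x n * phi (x - of_nat n)"
    by (simp only: S_coeff_convolution)
qed simp

locale nonarch_field =
  fixes absv :: "'a::field_char_0 \<Rightarrow> real"
  assumes nonarch: "nonarch_absv absv"
begin

lemma absv_nonneg [simp]: "absv x \<ge> 0"
  using nonarch by (simp add: nonarch_absv_def)

lemma absv_eq_0_iff [simp]: "absv x = 0 \<longleftrightarrow> x = 0"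
  using nonarch by (simp add: nonarch_absv_def)

lemma absv_mult: "absv (x * y) = absv x * absv y"
  using nonarch by (simp add: nonarch_absv_def)

lemma absv_add_le_max: "absv (x + y) \<le> max (absv x) (absv y)"
  using nonarch by (simp add: nonarch_absv_def)

lemma absv_0 [simp]: "absv 0 = 0"
  by simp

lemma absv_pos_iff [simp]: "absv x > 0 \<longleftrightarrow> x \<noteq> 0"
  using absv_nonneg[of x] absv_eq_0_iff[of x] by linarith

lemma absv_1 [simp]: "absv 1 = 1"
  using absv_mult[of 1 1] absv_eq_0_iff[of 1] by simp

lemma absv_minus [simp]: "absv (- x) = absv x"
proof -
  have "(absv (-1) - 1) * (absv (-1) + 1) = 0"
    using absv_mult[of "-1" "-1"] by (simp add: algebra_simps)
  then have "absv (-1) = 1"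
    using absv_nonneg[of "-1"] by simp
  then show ?thesis
    using absv_mult[of "-1" x] by simp
qed

lemma absv_minus_commute: "absv (x - y) = absv (y - x)"
  by (metis absv_minus minus_diff_eq)

lemma absv_diff_le_max: "absv (x - z) \<le> max (absv (x - y)) (absv (y - z))"
  using absv_add_le_max[of "x - y" "y - z"] by simp

lemma absv_diff_le_trans: "absv (x - y) \<le> e \<Longrightarrow> absv (y - z) \<le> e \<Longrightarrow> absv (x - z) \<le> e"
  using absv_diff_le_max[of x z y] by simp

lemma absv_diff_less_trans: "absv (x - y) < e \<Longrightarrow> absv (y - z) < e \<Longrightarrow> absv (x - z) < e"
  using absv_diff_le_max[of x z y] by simp

lemma absv_power: "absv (x ^ n) = absv x ^ n"
  by (induction n) (simp_all add: absv_mult)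

lemma absv_prod: "absv (prod f A) = (\<Prod>i\<in>A. absv (f i))"
  by (induction A rule: infinite_finite_induct) (simp_all add: absv_mult)

lemma absv_mult_le_right: "absv x \<le> 1 \<Longrightarrow> absv (x * y) \<le> absv y"
  by (simp add: absv_mult mult_left_le_one_le)

lemma absv_of_nat_le_1: "absv (of_nat n) \<le> 1"
proof (induction n)
  case (Suc n)
  then show ?case
    using absv_add_le_max[of 1 "of_nat n"] by simp
qed simp

lemma absv_sum_le:
  assumes "\<And>k. k \<in> A \<Longrightarrow> absv (f k) \<le> C" and "C \<ge> 0"
  shows "absv (sum f A) \<le> C"
  using assms
proof (induction A rule: infinite_finite_induct)
  case (insert x F)
  then show ?case
    by (simp add: order_trans[OF absv_add_le_max])
qed simp_all

lemma absv_square_sum_minus_triangle_sum_le: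
  fixes g :: "nat \<Rightarrow> nat \<Rightarrow> 'a"
  assumes "\<And>k j. k < L \<Longrightarrow> j < L \<Longrightarrow> L \<le> k + j \<Longrightarrow> absv (g k j) \<le> C" and "C \<ge> 0"
  shows "absv ((\<Sum>k<L. \<Sum>j<L. g k j) - (\<Sum>n<L. \<Sum>k\<le>n. g k (n - k))) \<le> C"
proof -
  have "(\<Sum>k<L. \<Sum>j<L. g k j) = (\<Sum>(k, j)\<in>{..<L} \<times> {..<L}. g k j)"
    by (rule sum.cartesian_product)
  moreover have "(\<Sum>n<L. \<Sum>k\<le>n. g k (n - k)) = (\<Sum>(k, j)\<in>{(k, j). k + j < L}. g k j)"
    using sum.triangle_reindex[of g L] by simp
  moreover have "{(k, j). k + j < L} \<subseteq> {..<L} \<times> {..<L}"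
    by auto
  ultimately have "(\<Sum>k<L. \<Sum>j<L. g k j) - (\<Sum>n<L. \<Sum>k\<le>n. g k (n - k))
      = (\<Sum>(k, j)\<in>{..<L} \<times> {..<L} - {(k, j). k + j < L}. g k j)"
    by (simp add: sum.subset_diff[of "{(k, j). k + j < L}"])
  also have "absv \<dots> \<le> C"
    using assms by (intro absv_sum_le) (auto simp: not_less)
  finally show ?thesis .
qed

lemma absv_eqI:
  assumes "\<And>e. e > 0 \<Longrightarrow> absv (x - y) \<le> e"
  shows "x = y"
proof -
  have "absv (x - y) \<le> 0"
    using assms by (rule field_le_epsilon) simp
  then show ?thesis
    using absv_nonneg[of "x - y"] by simp
qed

lemma absv_metric: "Metric_space UNIV (\<lambda>x y. absv (x - y))"
proof
  show "absv (x - z) \<le> absv (x - y) + absv (y - z)" for x y z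
    using absv_diff_le_max[of x z y] absv_nonneg[of "x - y"] absv_nonneg[of "y - z"] by linarith
qed (simp_all add: absv_minus_commute)

lemma absv_cauchy_iff_MCauchy:
  "absv_cauchy absv s \<longleftrightarrow> Metric_space.MCauchy UNIV (\<lambda>x y. absv (x - y)) s"
  unfolding absv_cauchy_def Metric_space.MCauchy_def[OF absv_metric] by auto

lemma absv_tendsto_unique:
  assumes "absv_tendsto absv s l" and "absv_tendsto absv s l'"
  shows "l = l'"
proof (rule absv_eqI)
  fix e :: real assume "e > 0"
  then obtain N N' where "\<forall>n\<ge>N. absv (s n - l) < e" and "\<forall>n\<ge>N'. absv (s n - l') < e"
    using assms unfolding absv_tendsto_def by blast
  then have "absv (s (max N N') - l) < e" and "absv (s (max N N') - l') < e"
    by simp_all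
  then show "absv (l - l') \<le> e"
    using absv_diff_le_max[of l l' "s (max N N')"] absv_minus_commute[of l] by simp
qed

lemma absv_suminf_eqI:
  "absv_tendsto absv (\<lambda>n. \<Sum>k<n. f k) s \<Longrightarrow> absv_suminf absv f = s"
  unfolding absv_suminf_def using absv_tendsto_unique by blast

lemma absv_tendsto_add:
  assumes "absv_tendsto absv X s" and "absv_tendsto absv Y t"
  shows "absv_tendsto absv (\<lambda>n. X n + Y n) (s + t)"
  unfolding absv_tendsto_def
proof (intro allI impI)
  fix e :: real assume "e > 0"
  then obtain N N' where N: "\<forall>n\<ge>N. absv (X n - s) < e" and N': "\<forall>n\<ge>N'. absv (Y n - t) < e"
    using assms unfolding absv_tendsto_def by blast
  have "absv (X n + Y n - (s + t)) < e" if "n \<ge> max N N'" for n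
  proof -
    have "absv (X n + Y n - (s + t)) \<le> max (absv (X n - s)) (absv (Y n - t))"
      using absv_add_le_max[of "X n - s" "Y n - t"] by (simp add: add_diff_add)
    also have "\<dots> < e"
      using that N N' by simp
    finally show ?thesis .
  qed
  then show "\<exists>N. \<forall>n\<ge>N. absv (X n + Y n - (s + t)) < e"
    by blast
qed

lemma absv_tendsto_mult_left:
  assumes "absv_tendsto absv X s"
  shows "absv_tendsto absv (\<lambda>n. a * X n) (a * s)"
  unfolding absv_tendsto_def
proof (intro allI impI)
  fix e :: real assume e: "e > 0"
  then have "e / (absv a + 1) > 0"
    by (simp add: add_nonneg_pos)
  then obtain N where N: "\<forall>n\<ge>N. absv (X n - s) < e / (absv a + 1)"
    using assms unfolding absv_tendsto_def by blast
  have "absv (a * X n - a * s) < e" if "n \<ge> N" for n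
  proof -
    have "absv (a * X n - a * s) = absv a * absv (X n - s)"
      by (simp add: absv_mult right_diff_distrib[symmetric])
    also have "\<dots> \<le> absv a * (e / (absv a + 1))"
      using N that by (intro mult_left_mono) (simp_all add: less_imp_le)
    also have "\<dots> = e - e / (absv a + 1)"
      using add_nonneg_pos[OF absv_nonneg[of a] zero_less_one] by (simp add: field_simps)
    also have "\<dots> < e"
      using \<open>e / (absv a + 1) > 0\<close> by simp
    finally show ?thesis .
  qed
  then show "\<exists>N. \<forall>n\<ge>N. absv (a * X n - a * s) < e"
    by blast
qed

lemma absv_partial_sums_tail_le:
  assumes "absv_tendsto absv (\<lambda>n. \<Sum>k<n. f k) s"
    and "\<And>k. k \<ge> N \<Longrightarrow> absv (f k) \<le> C" and "C \<ge> 0"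
  shows "absv (s - (\<Sum>k<N. f k)) \<le> C"
proof (rule field_le_epsilon)
  fix e :: real assume "e > 0"
  then obtain M where "\<forall>n\<ge>M. absv ((\<Sum>k<n. f k) - s) < e"
    using assms(1) unfolding absv_tendsto_def by blast
  then have close: "absv (s - (\<Sum>k<max M N. f k)) < e"
    by (simp add: absv_minus_commute)
  have "(\<Sum>k<max M N. f k) - (\<Sum>k<N. f k) = (\<Sum>k\<in>{N..<max M N}. f k)"
    by (simp add: lessThan_atLeast0 sum_diff_nat_ivl)
  also have "absv \<dots> \<le> C"
    using assms(2,3) by (intro absv_sum_le) auto
  finally show "absv (s - (\<Sum>k<N. f k)) \<le> C + e"
    using close absv_diff_le_max[of s "\<Sum>k<N. f k" "\<Sum>k<max M N. f k"] assms(3) \<open>e > 0\<close>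
    by simp
qed

lemma absv_prod_diff_le:
  assumes "absv x \<le> 1" and "absv x' \<le> 1"
  shows "absv ((\<Prod>i<k. x - of_nat i) - (\<Prod>i<k. x' - of_nat i)) \<le> absv (x - x')"
proof (induction k)
  case (Suc k)
  define P P' where "P = (\<Prod>i<k. x - of_nat i)" and "P' = (\<Prod>i<k. x' - of_nat i)"
  have "absv (z - of_nat i) \<le> 1" if "absv z \<le> 1" for z i
    using absv_add_le_max[of z "- of_nat i"] absv_of_nat_le_1[of i] that by simp
  then have "absv (x' - of_nat k) \<le> 1" and "absv (x - of_nat i) \<le> 1" for i
    using assms by simp_all
  then have "absv P \<le> 1"
    unfolding P_def absv_prod by (intro prod_le_1) simp_all
  have "(\<Prod>i<Suc k. x - of_nat i) - (\<Prod>i<Suc k. x' - of_nat i)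
      = P * (x - x') + (P - P') * (x' - of_nat k)"
    unfolding P_def P'_def by (simp add: algebra_simps)
  also have "absv \<dots> \<le> absv (x - x')"
    using absv_add_le_max[of "P * (x - x')" "(P - P') * (x' - of_nat k)"]
      absv_mult_le_right[OF \<open>absv P \<le> 1\<close>, of "x - x'"]
      absv_mult_le_right[OF \<open>absv (x' - of_nat k) \<le> 1\<close>, of "P - P'"] Suc
    unfolding P_def P'_def by (simp add: mult.commute)
  finally show ?case .
qed simp

lemma absv_gbinomial_diff_le:
  assumes "absv x \<le> 1" and "absv x' \<le> 1"
  shows "absv ((x gchoose k) - (x' gchoose k)) * absv (fact k :: 'a) \<le> absv (x - x')"
proof -
  have "((x gchoose k) - (x' gchoose k)) * fact k = (\<Prod>i<k. x - of_nat i) - (\<Prod>i<k. x' - of_nat i)"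
    by (simp add: left_diff_distrib gbinomial_mult_fact' atLeast0LessThan)
  then have "absv ((x gchoose k) - (x' gchoose k)) * absv (fact k :: 'a)
      = absv ((\<Prod>i<k. x - of_nat i) - (\<Prod>i<k. x' - of_nat i))"
    by (simp only: absv_mult[symmetric])
  then show ?thesis
    using absv_prod_diff_le[OF assms, of k] by simp
qed

lemma zero_in_Zp: "0 \<in> Zp absv"
  unfolding Zp_def by (auto intro!: exI[of _ 0])

lemma sup_norm_le:
  assumes "\<forall>x\<in>Zp absv. absv (f x) \<le> M"
  shows "sup_norm absv f \<le> M"
  unfolding sup_norm_def using assms zero_in_Zp by (intro cSup_least) auto

lemma absv_le_sup_norm:
  assumes "\<forall>x\<in>Zp absv. absv (f x) \<le> M" and "x \<in> Zp absv"
  shows "absv (f x) \<le> sup_norm absv f"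
  unfolding sup_norm_def using assms by (intro cSup_upper) (auto simp: bdd_above_def)

lemma cont_on_Zp_const: "cont_on_Zp absv (\<lambda>x. c)"
  unfolding cont_on_Zp_def by (auto intro: exI[of _ 1])

lemma cont_on_Zp_add:
  assumes "cont_on_Zp absv f" and "cont_on_Zp absv g"
  shows "cont_on_Zp absv (\<lambda>x. f x + g x)"
  unfolding cont_on_Zp_def
proof (intro ballI allI impI)
  fix x e assume x: "x \<in> Zp absv" and e: "(e::real) > 0"
  obtain d where d: "d > 0" "\<forall>x'\<in>Zp absv. absv (x' - x) < d \<longrightarrow> absv (f x' - f x) < e"
    using assms(1) x e unfolding cont_on_Zp_def by blast
  obtain d' where d': "d' > 0" "\<forall>x'\<in>Zp absv. absv (x' - x) < d' \<longrightarrow> absv (g x' - g x) < e"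
    using assms(2) x e unfolding cont_on_Zp_def by blast
  have "absv (f x' + g x' - (f x + g x)) < e" if "x' \<in> Zp absv" "absv (x' - x) < min d d'" for x'
  proof -
    have "absv (f x' + g x' - (f x + g x)) \<le> max (absv (f x' - f x)) (absv (g x' - g x))"
      using absv_add_le_max[of "f x' - f x" "g x' - g x"] by (simp add: add_diff_add)
    also have "\<dots> < e"
      using that d(2) d'(2) by simp
    finally show ?thesis .
  qed
  then show "\<exists>d>0. \<forall>x'\<in>Zp absv. absv (x' - x) < d \<longrightarrow> absv (f x' + g x' - (f x + g x)) < e"
    using d(1) d'(1) by (intro exI[of _ "min d d'"]) simp
qed

lemma cont_on_Zp_sum:
  "(\<And>k. k \<in> A \<Longrightarrow> cont_on_Zp absv (f k)) \<Longrightarrow> cont_on_Zp absv (\<lambda>x. \<Sum>k\<in>A. f k x)"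
  by (induction A rule: infinite_finite_induct) (simp_all add: cont_on_Zp_const cont_on_Zp_add)

lemma cont_on_Zp_mult_left:
  assumes "cont_on_Zp absv f"
  shows "cont_on_Zp absv (\<lambda>x. c * f x)"
  unfolding cont_on_Zp_def
proof (intro ballI allI impI)
  fix x e assume x: "x \<in> Zp absv" and e: "(e::real) > 0"
  have c: "absv c + 1 > 0"
    by (simp add: add_nonneg_pos)
  then have "e / (absv c + 1) > 0"
    using e by simp
  then obtain d where d: "d > 0" "\<forall>x'\<in>Zp absv. absv (x' - x) < d \<longrightarrow> absv (f x' - f x) < e / (absv c + 1)"
    using assms x unfolding cont_on_Zp_def by blast
  have "absv (c * f x' - c * f x) < e" if "x' \<in> Zp absv" "absv (x' - x) < d" for x'
  proof -
    have "absv (c * f x' - c * f x) = absv c * absv (f x' - f x)"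
      unfolding right_diff_distrib[symmetric] by (rule absv_mult)
    also have "\<dots> \<le> absv c * (e / (absv c + 1))"
      using that d(2) by (intro mult_left_mono) (simp_all add: less_imp_le)
    also have "\<dots> < e"
      using c e by (simp add: field_simps)
    finally show ?thesis .
  qed
  then show "\<exists>d>0. \<forall>x'\<in>Zp absv. absv (x' - x) < d \<longrightarrow> absv (c * f x' - c * f x) < e"
    using d(1) by blast
qed

lemma cont_on_Zp_mult:
  assumes "cont_on_Zp absv f" and "cont_on_Zp absv g"
    and "\<forall>x\<in>Zp absv. absv (f x) \<le> C" and "\<forall>x\<in>Zp absv. absv (g x) \<le> C"
  shows "cont_on_Zp absv (\<lambda>x. f x * g x)"
  unfolding cont_on_Zp_def
proof (intro ballI allI impI)
  fix x e assume x: "x \<in> Zp absv" and "(e::real) > 0"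
  have "C \<ge> 0"
    using order_trans[OF absv_nonneg bspec[OF assms(3) zero_in_Zp]] .
  define e' where "e' = e / (C + 1)"
  have "e' > 0" and "C * e' < e"
    unfolding e'_def using \<open>e > 0\<close> \<open>C \<ge> 0\<close> by (simp_all add: field_simps)
  obtain d where d: "d > 0" "\<forall>x'\<in>Zp absv. absv (x' - x) < d \<longrightarrow> absv (f x' - f x) < e'"
    using assms(1) x \<open>e' > 0\<close> unfolding cont_on_Zp_def by blast
  obtain d' where d': "d' > 0" "\<forall>x'\<in>Zp absv. absv (x' - x) < d' \<longrightarrow> absv (g x' - g x) < e'"
    using assms(2) x \<open>e' > 0\<close> unfolding cont_on_Zp_def by blast
  have "absv (f x' * g x' - f x * g x) < e"
    if "x' \<in> Zp absv" "absv (f x' - f x) < e'" "absv (g x' - g x) < e'" for x'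
  proof -
    have "f x' * g x' - f x * g x = (f x' - f x) * g x' + f x * (g x' - g x)"
      by (simp add: algebra_simps)
    then have "absv (f x' * g x' - f x * g x)
        \<le> max (absv (f x' - f x) * absv (g x')) (absv (f x) * absv (g x' - g x))"
      unfolding absv_mult[symmetric] by (simp only: absv_add_le_max)
    also have "\<dots> \<le> C * e'"
    proof (rule max.boundedI)
      show "absv (f x' - f x) * absv (g x') \<le> C * e'"
        using that(2) bspec[OF assms(4) that(1)] \<open>C \<ge> 0\<close>
        by (subst mult.commute) (intro mult_mono, simp_all add: less_imp_le)
      show "absv (f x) * absv (g x' - g x) \<le> C * e'"
        using that(3) bspec[OF assms(3) x] \<open>C \<ge> 0\<close> by (intro mult_mono) (simp_all add: less_imp_le)
    qed
    finally show ?thesis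
      using \<open>C * e' < e\<close> by simp
  qed
  then show "\<exists>d>0. \<forall>x'\<in>Zp absv. absv (x' - x) < d \<longrightarrow> absv (f x' * g x' - f x * g x) < e"
    using d d' by (intro exI[of _ "min d d'"]) simp
qed

lemma cont_on_Zp_uniform_limit:
  assumes "\<And>e. e > 0 \<Longrightarrow> \<exists>g. cont_on_Zp absv g \<and> (\<forall>x\<in>Zp absv. absv (f x - g x) < e)"
  shows "cont_on_Zp absv f"
  unfolding cont_on_Zp_def
proof (intro ballI allI impI)
  fix x e assume x: "x \<in> Zp absv" and "(e::real) > 0"
  then obtain g where g: "cont_on_Zp absv g" "\<forall>x\<in>Zp absv. absv (f x - g x) < e"
    using assms by blast
  then obtain d where "d > 0" "\<forall>x'\<in>Zp absv. absv (x' - x) < d \<longrightarrow> absv (g x' - g x) < e"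
    using x \<open>e > 0\<close> unfolding cont_on_Zp_def by blast
  moreover have "absv (f x' - f x) < e" if "x' \<in> Zp absv" "absv (g x' - g x) < e" for x'
  proof -
    have "absv (f x' - g x) < e"
      using absv_diff_less_trans[of "f x'" "g x'" e "g x"] g(2) that by simp
    moreover have "absv (g x - f x) < e"
      using g(2) x absv_minus_commute[of "g x" "f x"] by simp
    ultimately show ?thesis
      by (rule absv_diff_less_trans)
  qed
  ultimately show "\<exists>d>0. \<forall>x'\<in>Zp absv. absv (x' - x) < d \<longrightarrow> absv (f x' - f x) < e"
    by blast
qed

end

locale complete_nonarch_field = nonarch_field +
  assumes complete: "absv_cauchy absv s \<Longrightarrow> \<exists>l. absv_tendsto absv s l"
begin

lemma absv_summable:
  assumes "\<And>e. e > 0 \<Longrightarrow> \<exists>N. \<forall>k\<ge>N. absv (f k) \<le> e"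
  shows "absv_tendsto absv (\<lambda>n. \<Sum>k<n. f k) (absv_suminf absv f)"
proof -
  have "absv_cauchy absv (\<lambda>n. \<Sum>k<n. f k)"
    unfolding absv_cauchy_def
  proof (intro allI impI)
    fix e :: real assume "e > 0"
    then obtain N where N: "\<forall>k\<ge>N. absv (f k) \<le> e / 2"
      using assms[of "e / 2"] by auto
    have tail: "absv ((\<Sum>k<n. f k) - (\<Sum>k<N. f k)) \<le> e / 2" if "n \<ge> N" for n
    proof -
      have "(\<Sum>k<n. f k) - (\<Sum>k<N. f k) = (\<Sum>k\<in>{N..<n}. f k)"
        using that by (simp add: lessThan_atLeast0 sum_diff_nat_ivl)
      also have "absv \<dots> \<le> e / 2"
        using N \<open>e > 0\<close> by (intro absv_sum_le) auto
      finally show ?thesis .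
    qed
    have "absv ((\<Sum>k<m. f k) - (\<Sum>k<n. f k)) < e" if "m \<ge> N" "n \<ge> N" for m n
    proof -
      have "absv ((\<Sum>k<m. f k) - (\<Sum>k<n. f k)) \<le> e / 2"
        using tail[OF that(1)] tail[OF that(2)]
        by (rule absv_diff_le_trans[OF _ ord_eq_le_trans[OF absv_minus_commute]])
      then show ?thesis
        using \<open>e > 0\<close> by simp
    qed
    then show "\<exists>N. \<forall>m\<ge>N. \<forall>n\<ge>N. absv ((\<Sum>k<m. f k) - (\<Sum>k<n. f k)) < e"
      by blast
  qed
  then show ?thesis
    using complete absv_suminf_eqI by blast
qed

end

locale padic_complete_field = complete_nonarch_field absv
  for absv :: "'a::field_char_0 \<Rightarrow> real" +
  fixes p :: nat
  assumes prime_p: "prime p"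
    and absv_of_nat_p: "absv (of_nat p) = 1 / real p"
begin

lemma p_gt_1: "p > 1"
  using prime_p prime_gt_1_nat by blast

lemma absv_of_nat_p_power_mult: "absv (of_nat (p ^ m * q)) \<le> (1 / real p) ^ m"
proof -
  have "absv (of_nat (p ^ m * q)) = (1 / real p) ^ m * absv (of_nat q :: 'a)"
    by (simp only: of_nat_mult of_nat_power absv_mult absv_power absv_of_nat_p)
  also have "\<dots> \<le> (1 / real p) ^ m"
    using absv_of_nat_le_1[of q] by (intro mult_right_le_one_le) simp_all
  finally show ?thesis .
qed

lemma exists_p_power_less: "e > 0 \<Longrightarrow> \<exists>m. (1 / real p) ^ m < e"
  using p_gt_1 by (intro real_arch_pow_inv) simp_all

lemma p_power_dvd_fact: "p ^ m dvd fact (p * m)"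
proof (induction m)
  case (Suc m)
  have "fact (p * m) dvd (fact (p * m + (p - 1)) :: nat)"
    by (rule fact_dvd) simp
  then have "p ^ m dvd (fact (p * m + (p - 1)) :: nat)"
    using Suc dvd_trans by blast
  moreover have "fact (p * Suc m) = (p * Suc m) * (fact (p * m + (p - 1)) :: nat)"
  proof -
    have "p * Suc m = Suc (p * m + (p - 1))"
      using p_gt_1 by simp
    then show ?thesis
      by (simp only: fact_Suc of_nat_id)
  qed
  ultimately show ?case
    by (simp add: mult_dvd_mono mult.commute)
qed simp

lemma absv_fact_antimono: "k \<le> m \<Longrightarrow> absv (fact m :: 'a) \<le> absv (fact k :: 'a)"
proof (induction m rule: dec_induct)
  case (step m)
  then show ?case
    using absv_mult_le_right[OF absv_of_nat_le_1[of "Suc m"], of "fact m"] by simp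
qed simp

lemma absv_fact_le_1: "absv (fact k :: 'a) \<le> 1"
  using absv_fact_antimono[of 0 k] by simp

lemma absv_fact_mult_vanishes:
  assumes "M \<ge> 0" and "e > 0"
  shows "\<exists>N. \<forall>k\<ge>N. absv (fact k :: 'a) * M \<le> e"
proof -
  have "e / (M + 1) > 0"
    using assms by (simp add: add_nonneg_pos)
  then obtain m where m: "(1 / real p) ^ m < e / (M + 1)"
    using exists_p_power_less by blast
  obtain q where "fact (p * m) = p ^ m * q"
    using p_power_dvd_fact by blast
  then have "(fact (p * m) :: 'a) = of_nat (p ^ m * q)"
    by (metis of_nat_fact)
  then have "absv (fact (p * m) :: 'a) \<le> (1 / real p) ^ m"
    using absv_of_nat_p_power_mult by simp
  have "absv (fact k :: 'a) * M \<le> e" if "k \<ge> p * m" for k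
  proof -
    have "absv (fact k :: 'a) * M \<le> e / (M + 1) * M"
      using absv_fact_antimono[OF that] \<open>absv (fact (p * m)) \<le> _\<close> m assms(1)
      by (intro mult_right_mono) simp_all
    also have "\<dots> \<le> e"
      using assms by (simp add: field_simps)
    finally show ?thesis .
  qed
  then show ?thesis
    by blast
qed

lemma of_nat_in_Zp [simp]: "of_nat n \<in> Zp absv"
  unfolding Zp_def by (auto intro!: exI[of _ n])

lemma Zp_add:
  assumes "x \<in> Zp absv" and "y \<in> Zp absv"
  shows "x + y \<in> Zp absv"
  unfolding Zp_def
proof (intro CollectI allI impI)
  fix e :: real assume "e > 0"
  then obtain m n where "absv (x - of_nat m) < e" "absv (y - of_nat n) < e"
    using assms unfolding Zp_def by blast
  then have "absv (x + y - of_nat (m + n)) < e"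
    using absv_add_le_max[of "x - of_nat m" "y - of_nat n"] by (simp add: add_diff_add)
  then show "\<exists>n. absv (x + y - of_nat n) < e"
    by blast
qed

lemma Zp_uminus:
  assumes "x \<in> Zp absv"
  shows "- x \<in> Zp absv"
  unfolding Zp_def
proof (intro CollectI allI impI)
  fix e :: real assume "e > 0"
  then obtain m n where m: "(1 / real p) ^ m < e" and n: "absv (x - of_nat n) < e"
    using exists_p_power_less assms unfolding Zp_def by blast
  \<comment> \<open>the natural number p^m n - n approximates -n\<close>
  have "n \<le> p ^ m * n"
    using p_gt_1 by simp
  then have "- x - of_nat (p ^ m * n - n) = - (x - of_nat n) + - of_nat (p ^ m * n)"
    by (simp add: of_nat_diff)
  then have "absv (- x - of_nat (p ^ m * n - n))
      \<le> max (absv (- (x - of_nat n))) (absv (- of_nat (p ^ m * n) :: 'a))"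
    by (simp only: absv_add_le_max)
  also have "\<dots> < e"
    unfolding absv_minus using absv_of_nat_p_power_mult[of m n] m n by simp
  finally show "\<exists>n. absv (- x - of_nat n) < e"
    by blast
qed

lemma Zp_diff: "x \<in> Zp absv \<Longrightarrow> y \<in> Zp absv \<Longrightarrow> x - y \<in> Zp absv"
  using Zp_add[of x "- y"] Zp_uminus[of y] by simp

lemma Zp_diff_of_nat: "x \<in> Zp absv \<Longrightarrow> x - of_nat k \<in> Zp absv"
  by (simp add: Zp_diff)

lemma Zp_limit:
  assumes "range s \<subseteq> Zp absv" and "absv_tendsto absv s l"
  shows "l \<in> Zp absv"
  unfolding Zp_def
proof (intro CollectI allI impI)
  fix e :: real assume "e > 0"
  then obtain N where "absv (s N - l) < e"
    using assms(2) unfolding absv_tendsto_def by blast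
  moreover obtain n where "absv (s N - of_nat n) < e"
    using assms(1) \<open>e > 0\<close> unfolding Zp_def by blast
  ultimately have "absv (l - of_nat n) < e"
    using absv_diff_le_max[of l "of_nat n" "s N"] absv_minus_commute[of l] by simp
  then show "\<exists>n. absv (l - of_nat n) < e"
    by blast
qed

lemma absv_le_1_if_in_Zp:
  assumes "x \<in> Zp absv"
  shows "absv x \<le> 1"
proof -
  obtain n where "absv (x - of_nat n) < 1"
    using assms unfolding Zp_def by fastforce
  then show ?thesis
    using absv_add_le_max[of "x - of_nat n" "of_nat n"] absv_of_nat_le_1[of n] by simp
qed

lemma absv_gbinomial_le_1:
  assumes "x \<in> Zp absv"
  shows "absv (x gchoose k) \<le> 1"
proof -
  have "absv (fact k :: 'a) > 0"
    by simp
  then obtain n where n: "absv (x - of_nat n) < absv (fact k :: 'a)"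
    using assms unfolding Zp_def by blast
  have "absv ((x gchoose k) - (of_nat n gchoose k)) * absv (fact k :: 'a) < 1 * absv (fact k :: 'a)"
    using order_le_less_trans[OF absv_gbinomial_diff_le[OF absv_le_1_if_in_Zp[OF assms]
          absv_of_nat_le_1[of n], where k=k] n]
    by (simp only: mult_1)
  then have "absv ((x gchoose k) - (of_nat n gchoose k)) < 1"
    by (rule mult_right_less_imp_less) simp
  moreover have "absv (of_nat n gchoose k :: 'a) \<le> 1"
    using absv_of_nat_le_1[of "n choose k"] by (simp add: binomial_gbinomial[symmetric])
  ultimately show ?thesis
    using absv_add_le_max[of "(x gchoose k) - (of_nat n gchoose k)" "of_nat n gchoose k"] by simp
qed

lemma cont_on_Zp_gbinomial: "cont_on_Zp absv (\<lambda>x. x gchoose k)"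
  unfolding cont_on_Zp_def
proof (intro ballI allI impI)
  fix x e assume x: "x \<in> Zp absv" and "(e::real) > 0"
  have "absv ((x' gchoose k) - (x gchoose k)) < e"
    if "x' \<in> Zp absv" "absv (x' - x) < e * absv (fact k :: 'a)" for x'
  proof -
    have "absv ((x' gchoose k) - (x gchoose k)) * absv (fact k :: 'a) < e * absv (fact k :: 'a)"
      using absv_gbinomial_diff_le[OF absv_le_1_if_in_Zp absv_le_1_if_in_Zp, OF that(1) x, of k]
        that(2) by linarith
    then show ?thesis
      by simp
  qed
  moreover have "e * absv (fact k :: 'a) > 0"
    using \<open>e > 0\<close> by simp
  ultimately show "\<exists>d>0. \<forall>x'\<in>Zp absv. absv (x' - x) < d \<longrightarrow> absv ((x' gchoose k) - (x gchoose k)) < e"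
    by blast
qed

lemma cont_on_Zp_shift:
  assumes "cont_on_Zp absv phi"
  shows "cont_on_Zp absv (\<lambda>x. phi (x - of_nat k))"
  unfolding cont_on_Zp_def
proof (intro ballI allI impI)
  fix x e assume "x \<in> Zp absv" and "(e::real) > 0"
  then obtain d where "d > 0"
    "\<forall>x'\<in>Zp absv. absv (x' - (x - of_nat k)) < d \<longrightarrow> absv (phi x' - phi (x - of_nat k)) < e"
    using assms Zp_diff_of_nat unfolding cont_on_Zp_def by blast
  then show "\<exists>d>0. \<forall>x'\<in>Zp absv. absv (x' - x) < d \<longrightarrow> absv (phi (x' - of_nat k) - phi (x - of_nat k)) < e"
    using Zp_diff_of_nat by (intro exI[of _ d]) simp
qed

lemma Zp_totally_bounded: "Metric_space.mtotally_bounded UNIV (\<lambda>x y. absv (x - y)) (Zp absv)"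
  unfolding Metric_space.mtotally_bounded_def[OF absv_metric]
proof (intro allI impI)
  fix e :: real assume "e > 0"
  then obtain m where m: "(1 / real p) ^ m < e"
    using exists_p_power_less by blast
  have "\<exists>k\<in>{..<p ^ m}. absv (of_nat k - x) < e" if x: "x \<in> Zp absv" for x
  proof -
    obtain n where n: "absv (x - of_nat n) < e"
      using x \<open>e > 0\<close> unfolding Zp_def by blast
    have "(of_nat n :: 'a) - of_nat (n mod p ^ m) = of_nat (p ^ m * (n div p ^ m))"
      by (simp flip: of_nat_diff add: minus_mod_eq_mult_div)
    then have "absv ((of_nat n :: 'a) - of_nat (n mod p ^ m)) < e"
      using absv_of_nat_p_power_mult[of m "n div p ^ m"] m by simp
    then have "absv (x - of_nat (n mod p ^ m)) < e"
      using n by (rule absv_diff_less_trans[rotated])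
    then have "absv (of_nat (n mod p ^ m) - x) < e"
      by (simp only: absv_minus_commute)
    moreover have "n mod p ^ m \<in> {..<p ^ m}"
      using p_gt_1 by simp
    ultimately show ?thesis
      by blast
  qed
  then have "Zp absv \<subseteq> (\<Union>x\<in>of_nat ` {..<p ^ m}. Metric_space.mball UNIV (\<lambda>x y. absv (x - y)) x e)"
    by (auto simp: Metric_space.in_mball[OF absv_metric])
  then show "\<exists>K. finite K \<and> K \<subseteq> Zp absv \<and>
      Zp absv \<subseteq> (\<Union>x\<in>K. Metric_space.mball UNIV (\<lambda>x y. absv (x - y)) x e)"
    by (intro exI[of _ "of_nat ` {..<p ^ m}"]) auto
qed

lemma Zp_sequentially_compact:
  fixes s :: "nat \<Rightarrow> 'a"
  assumes "range s \<subseteq> Zp absv"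
  obtains r l where "strict_mono r" and "l \<in> Zp absv" and "absv_tendsto absv (s \<circ> r) l"
proof -
  have "\<forall>\<sigma>::nat \<Rightarrow> 'a. range \<sigma> \<subseteq> Zp absv \<longrightarrow>
      (\<exists>r. strict_mono r \<and> Metric_space.MCauchy UNIV (\<lambda>x y. absv (x - y)) (\<sigma> \<circ> r))"
    using Zp_totally_bounded unfolding Metric_space.mtotally_bounded_sequentially[OF absv_metric]
    by (rule conjunct2)
  then obtain r where r: "strict_mono r" "Metric_space.MCauchy UNIV (\<lambda>x y. absv (x - y)) (s \<circ> r)"
    using assms by blast
  then obtain l where l: "absv_tendsto absv (s \<circ> r) l"
    using complete absv_cauchy_iff_MCauchy by blast
  have "range (s \<circ> r) \<subseteq> Zp absv"
    using assms by (auto simp: image_subset_iff)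
  with l have "l \<in> Zp absv"
    by (rule Zp_limit[rotated])
  with r(1) l show thesis
    using that by blast
qed

lemma cont_on_Zp_locally_bounded:
  assumes "cont_on_Zp absv phi" and "l \<in> Zp absv"
  obtains d where "d > 0" and "\<forall>x\<in>Zp absv. absv (x - l) < d \<longrightarrow> absv (phi x) \<le> max 1 (absv (phi l))"
proof -
  obtain d where d: "d > 0" "\<forall>x\<in>Zp absv. absv (x - l) < d \<longrightarrow> absv (phi x - phi l) < 1"
    using assms unfolding cont_on_Zp_def by (metis zero_less_one)
  have "absv (phi x) \<le> max 1 (absv (phi l))" if "absv (phi x - phi l) < 1" for x
    using absv_add_le_max[of "phi x - phi l" "phi l"] that by (simp add: max_def split: if_splits)
  with d show thesis
    using that by blast
qed

lemma cont_on_Zp_bounded: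
  assumes "cont_on_Zp absv phi"
  obtains M where "\<forall>x\<in>Zp absv. absv (phi x) \<le> M"
proof -
  have "\<exists>M. \<forall>x\<in>Zp absv. absv (phi x) \<le> M"
  proof (rule ccontr)
    assume "\<nexists>M. \<forall>x\<in>Zp absv. absv (phi x) \<le> M"
    then have "\<forall>n::nat. \<exists>x. x \<in> Zp absv \<and> real n < absv (phi x)"
      by (auto simp: not_le)
    then have "\<exists>s. \<forall>n. s n \<in> Zp absv \<and> real n < absv (phi (s n))"
      by (rule choice)
    then obtain s where s: "\<And>n. s n \<in> Zp absv" "\<And>n. real n < absv (phi (s n))"
      by blast
    then obtain r l where r: "strict_mono r" "l \<in> Zp absv" "absv_tendsto absv (s \<circ> r) l"
      using Zp_sequentially_compact[of s] by blast
    obtain d where d: "d > 0" "\<forall>x\<in>Zp absv. absv (x - l) < d \<longrightarrow> absv (phi x) \<le> max 1 (absv (phi l))"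
      using cont_on_Zp_locally_bounded[OF assms r(2)] by blast
    then obtain N where N: "\<forall>n\<ge>N. absv (s (r n) - l) < d"
      using r(3) unfolding absv_tendsto_def by auto
    define n where "n = max N (nat \<lceil>max 1 (absv (phi l))\<rceil>)"
    have "absv (phi (s (r n))) \<le> max 1 (absv (phi l))"
      using d(2) s(1) N unfolding n_def by simp
    moreover have "max 1 (absv (phi l)) \<le> real (r n)"
      using seq_suble[OF r(1), of n] unfolding n_def by linarith
    ultimately show False
      using s(2)[of "r n"] by linarith
  qed
  then show thesis
    using that by blast
qed

lemma S_op_eq_absv_suminf: "S_op absv y phi x = absv_suminf absv (\<lambda>k. S_coeff y x k * phi (x - of_nat k))"
  by (simp add: S_op_def S_coeff_def)

lemma absv_S_coeff_le:
  assumes "y \<in> Zp absv" and "x \<in> Zp absv"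
  shows "absv (S_coeff y x k) \<le> absv (fact k :: 'a)"
proof -
  have "absv (S_coeff y x k) = absv (fact k :: 'a) * (absv (y gchoose k) * absv (x gchoose k))"
    by (simp add: S_coeff_def absv_mult absv_power)
  also have "\<dots> \<le> absv (fact k :: 'a) * (1 * 1)"
    using absv_gbinomial_le_1[OF assms(1)] absv_gbinomial_le_1[OF assms(2)]
    by (intro mult_left_mono mult_mono) simp_all
  finally show ?thesis
    by simp
qed

lemma absv_S_coeff_mult_le:
  assumes "y \<in> Zp absv" and "x \<in> Zp absv" and "\<forall>t\<in>Zp absv. absv (phi t) \<le> M"
  shows "absv (S_coeff y x k * phi (x - of_nat k)) \<le> absv (fact k :: 'a) * M"
  unfolding absv_mult using absv_S_coeff_le[OF assms(1,2)] bspec[OF assms(3) Zp_diff_of_nat[OF assms(2)]]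
  by (intro mult_mono) (simp_all add: order_trans[OF absv_nonneg bspec[OF assms(3) zero_in_Zp]])

lemma S_op_sums:
  assumes "y \<in> Zp absv" and "x \<in> Zp absv" and "\<forall>t\<in>Zp absv. absv (phi t) \<le> M"
  shows "absv_tendsto absv (\<lambda>n. \<Sum>k<n. S_coeff y x k * phi (x - of_nat k)) (S_op absv y phi x)"
  unfolding S_op_eq_absv_suminf
proof (rule absv_summable)
  fix e :: real assume "e > 0"
  then obtain N where N: "\<forall>k\<ge>N. absv (fact k :: 'a) * M \<le> e"
    using absv_fact_mult_vanishes[OF order_trans[OF absv_nonneg bspec[OF assms(3) zero_in_Zp]]] by blast
  have "absv (S_coeff y x k * phi (x - of_nat k)) \<le> e" if "k \<ge> N" for k
    using order_trans[OF absv_S_coeff_mult_le[OF assms] N[rule_format, OF that]] .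
  then show "\<exists>N. \<forall>k\<ge>N. absv (S_coeff y x k * phi (x - of_nat k)) \<le> e"
    by blast
qed

lemma S_op_tail_le:
  assumes "y \<in> Zp absv" and "x \<in> Zp absv" and "\<forall>t\<in>Zp absv. absv (phi t) \<le> M"
  shows "absv (S_op absv y phi x - (\<Sum>k<N. S_coeff y x k * phi (x - of_nat k))) \<le> absv (fact N :: 'a) * M"
proof (rule absv_partial_sums_tail_le[OF S_op_sums[OF assms]])
  have M: "M \<ge> 0"
    using order_trans[OF absv_nonneg bspec[OF assms(3) zero_in_Zp]] .
  then show "absv (fact N :: 'a) * M \<ge> 0"
    by simp
  fix k assume "k \<ge> N"
  then show "absv (S_coeff y x k * phi (x - of_nat k)) \<le> absv (fact N :: 'a) * M"
    using order_trans[OF absv_S_coeff_mult_le[OF assms] mult_right_mono[OF absv_fact_antimono M]] by blast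
qed

lemma absv_S_op_le:
  assumes "y \<in> Zp absv" and "x \<in> Zp absv" and "\<forall>t\<in>Zp absv. absv (phi t) \<le> M"
  shows "absv (S_op absv y phi x) \<le> M"
  using S_op_tail_le[OF assms, where N = 0] by simp

lemma cont_on_Zp_S_op:
  assumes "y \<in> Zp absv" and "cont_on_Zp absv phi"
  shows "cont_on_Zp absv (S_op absv y phi)"
proof -
  obtain M where M: "\<forall>x\<in>Zp absv. absv (phi x) \<le> M"
    using cont_on_Zp_bounded[OF assms(2)] by blast
  have "cont_on_Zp absv (\<lambda>x. S_coeff y x k * phi (x - of_nat k))" for k
  proof (rule cont_on_Zp_mult[where C = "max 1 M"])
    show "cont_on_Zp absv (\<lambda>x. S_coeff y x k)"
      unfolding S_coeff_def by (intro cont_on_Zp_mult_left cont_on_Zp_gbinomial)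
    show "cont_on_Zp absv (\<lambda>x. phi (x - of_nat k))"
      using assms(2) by (rule cont_on_Zp_shift)
    have "absv (S_coeff y x k) \<le> 1" if "x \<in> Zp absv" for x
      using order_trans[OF absv_S_coeff_le[OF assms(1) that] absv_fact_le_1] .
    then show "\<forall>x\<in>Zp absv. absv (S_coeff y x k) \<le> max 1 M"
      by (simp add: le_max_iff_disj)
    show "\<forall>x\<in>Zp absv. absv (phi (x - of_nat k)) \<le> max 1 M"
      using M Zp_diff_of_nat by (simp add: le_max_iff_disj)
  qed
  then have partial_sums: "cont_on_Zp absv (\<lambda>x. \<Sum>k<N. S_coeff y x k * phi (x - of_nat k))" for N
    by (rule cont_on_Zp_sum)
  show ?thesis
  proof (rule cont_on_Zp_uniform_limit)
    fix e :: real assume "e > 0"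
    then obtain N where N: "absv (fact N :: 'a) * M \<le> e / 2"
      using absv_fact_mult_vanishes[OF order_trans[OF absv_nonneg bspec[OF M zero_in_Zp]], where e = "e / 2"] by auto
    have "absv (S_op absv y phi x - (\<Sum>k<N. S_coeff y x k * phi (x - of_nat k))) < e"
      if "x \<in> Zp absv" for x
      using S_op_tail_le[OF assms(1) that M, where N = N] N \<open>e > 0\<close> by simp
    then show "\<exists>g. cont_on_Zp absv g \<and> (\<forall>x\<in>Zp absv. absv (S_op absv y phi x - g x) < e)"
      using partial_sums by blast
  qed
qed

lemma S_op_linear:
  assumes "y \<in> Zp absv" and "x \<in> Zp absv"
    and "\<forall>t\<in>Zp absv. absv (phi t) \<le> M" and "\<forall>t\<in>Zp absv. absv (psi t) \<le> M'"
  shows "S_op absv y (\<lambda>t. a * phi t + b * psi t) x = a * S_op absv y phi x + b * S_op absv y psi x"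
proof -
  have "absv_tendsto absv (\<lambda>n. a * (\<Sum>k<n. S_coeff y x k * phi (x - of_nat k))
      + b * (\<Sum>k<n. S_coeff y x k * psi (x - of_nat k))) (a * S_op absv y phi x + b * S_op absv y psi x)"
    using S_op_sums[OF assms(1,2,3)] S_op_sums[OF assms(1,2,4)]
    by (intro absv_tendsto_add absv_tendsto_mult_left)
  then show ?thesis
    unfolding S_op_eq_absv_suminf
    by (intro absv_suminf_eqI) (simp add: sum_distrib_left sum.distrib algebra_simps)
qed

lemma S_op_0: "S_op absv 0 phi x = phi x"
proof -
  have "absv_tendsto absv (\<lambda>n. \<Sum>k<n. S_coeff 0 x k * phi (x - of_nat k)) (phi x)"
    unfolding absv_tendsto_def
  proof (intro allI impI)
    fix e :: real assume "e > 0"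
    have "(\<Sum>k<n. S_coeff 0 x k * phi (x - of_nat k)) = phi x" if "n \<ge> 1" for n
    proof -
      have "(\<Sum>k<n. S_coeff 0 x k * phi (x - of_nat k)) = (\<Sum>k<n. if k = 0 then phi x else 0)"
        by (rule sum.cong) (simp_all add: S_coeff_0_left)
      then show ?thesis
        using that by simp
    qed
    then show "\<exists>N. \<forall>n\<ge>N. absv ((\<Sum>k<n. S_coeff 0 x k * phi (x - of_nat k)) - phi x) < e"
      using \<open>e > 0\<close> by (intro exI[of _ 1]) simp
  qed
  then show ?thesis
    unfolding S_op_eq_absv_suminf by (rule absv_suminf_eqI)
qed

lemma absv_S_op_expansion_le:
  assumes "y \<in> Zp absv" and "z \<in> Zp absv" and "x \<in> Zp absv" and "\<forall>t\<in>Zp absv. absv (phi t) \<le> M"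
  shows "absv ((\<Sum>k<L. S_coeff z x k * S_op absv y phi (x - of_nat k))
      - (\<Sum>k<L. \<Sum>j<L. S_coeff z x k * S_coeff y (x - of_nat k) j * phi (x - of_nat (k + j))))
    \<le> absv (fact L :: 'a) * M"
proof -
  have "(\<Sum>k<L. S_coeff z x k * S_op absv y phi (x - of_nat k))
      - (\<Sum>k<L. \<Sum>j<L. S_coeff z x k * S_coeff y (x - of_nat k) j * phi (x - of_nat (k + j)))
    = (\<Sum>k<L. S_coeff z x k * (S_op absv y phi (x - of_nat k)
        - (\<Sum>j<L. S_coeff y (x - of_nat k) j * phi (x - of_nat k - of_nat j))))"
    by (simp add: sum_subtractf right_diff_distrib sum_distrib_left mult.assoc diff_diff_eq)
  also have "absv \<dots> \<le> absv (fact L :: 'a) * M"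
  proof (rule absv_sum_le)
    fix k
    have "absv (S_coeff z x k) \<le> 1"
      using order_trans[OF absv_S_coeff_le[OF assms(2,3)] absv_fact_le_1] .
    then show "absv (S_coeff z x k * (S_op absv y phi (x - of_nat k)
        - (\<Sum>j<L. S_coeff y (x - of_nat k) j * phi (x - of_nat k - of_nat j)))) \<le> absv (fact L :: 'a) * M"
      by (rule order_trans[OF absv_mult_le_right
            S_op_tail_le[OF assms(1) Zp_diff_of_nat[OF assms(3)] assms(4), where N = L]])
  qed (use order_trans[OF absv_nonneg bspec[OF assms(4) zero_in_Zp]] in simp)
  finally show ?thesis .
qed

lemma absv_S_coeff_square_minus_triangle_le:
  assumes "y \<in> Zp absv" and "z \<in> Zp absv" and "x \<in> Zp absv" and "\<forall>t\<in>Zp absv. absv (phi t) \<le> M"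
    and N: "\<forall>k\<ge>N. absv (fact k :: 'a) * M \<le> e"
  shows "absv ((\<Sum>k<2 * N. \<Sum>j<2 * N. S_coeff z x k * S_coeff y (x - of_nat k) j * phi (x - of_nat (k + j)))
      - (\<Sum>n<2 * N. S_coeff (z + y) x n * phi (x - of_nat n))) \<le> e"
proof -
  have M: "M \<ge> 0"
    using order_trans[OF absv_nonneg bspec[OF assms(4) zero_in_Zp]] .
  have "absv (S_coeff z x k * S_coeff y (x - of_nat k) j * phi (x - of_nat (k + j))) \<le> e"
    if "2 * N \<le> k + j" for k j
  proof -
    have "absv (S_coeff z x k * S_coeff y (x - of_nat k) j * phi (x - of_nat (k + j)))
        \<le> absv (fact k :: 'a) * absv (fact j :: 'a) * M"
      unfolding absv_mult using absv_S_coeff_le[OF assms(2,3)]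
        absv_S_coeff_le[OF assms(1) Zp_diff_of_nat[OF assms(3)]]
        bspec[OF assms(4) Zp_diff_of_nat[OF assms(3), of "k + j"]]
      by (intro mult_mono) (simp_all add: mult_nonneg_nonneg)
    also have "\<dots> \<le> e"
    proof (cases "N \<le> k")
      case True
      have "absv (fact k :: 'a) * absv (fact j :: 'a) * M \<le> absv (fact k :: 'a) * M"
        using M absv_fact_le_1[of j] by (intro mult_right_mono mult_right_le_one_le) simp_all
      also have "\<dots> \<le> e"
        using N True by simp
      finally show ?thesis .
    next
      case False
      then have "N \<le> j"
        using that by linarith
      have "absv (fact k :: 'a) * absv (fact j :: 'a) * M \<le> absv (fact j :: 'a) * M"
        using M absv_fact_le_1[of k] by (intro mult_right_mono mult_left_le_one_le) simp_all
      also have "\<dots> \<le> e"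
        using N \<open>N \<le> j\<close> by simp
      finally show ?thesis .
    qed
    finally show ?thesis .
  qed
  moreover have "e \<ge> 0"
    using order_trans[OF mult_nonneg_nonneg[OF absv_nonneg M] N[rule_format, OF order_refl]] .
  ultimately show ?thesis
    using absv_square_sum_minus_triangle_sum_le[where L = "2 * N"
        and g = "\<lambda>k j. S_coeff z x k * S_coeff y (x - of_nat k) j * phi (x - of_nat (k + j))" and C = e]
    by (simp only: S_coeff_triangle_sum)
qed

lemma S_op_S_op:
  assumes "y \<in> Zp absv" and "z \<in> Zp absv" and "x \<in> Zp absv" and "\<forall>t\<in>Zp absv. absv (phi t) \<le> M"
  shows "S_op absv z (S_op absv y phi) x = S_op absv (z + y) phi x"
proof (rule absv_eqI)
  fix e :: real assume "e > 0"
  then obtain N where N: "\<forall>k\<ge>N. absv (fact k :: 'a) * M \<le> e"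
    using absv_fact_mult_vanishes[OF order_trans[OF absv_nonneg bspec[OF assms(4) zero_in_Zp]]] by blast
  define L where "L = 2 * N"
  define double_sum where "double_sum =
    (\<Sum>k<L. \<Sum>j<L. S_coeff z x k * S_coeff y (x - of_nat k) j * phi (x - of_nat (k + j)))"
  have "\<forall>t\<in>Zp absv. absv (S_op absv y phi t) \<le> M"
    using absv_S_op_le[OF assms(1) _ assms(4)] by blast
  then have outer: "absv (S_op absv z (S_op absv y phi) x
      - (\<Sum>k<L. S_coeff z x k * S_op absv y phi (x - of_nat k))) \<le> e"
    using order_trans[OF S_op_tail_le[OF assms(2,3)] N[rule_format, of L]] unfolding L_def by simp
  have expansion: "absv ((\<Sum>k<L. S_coeff z x k * S_op absv y phi (x - of_nat k)) - double_sum) \<le> e"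
    using order_trans[OF absv_S_op_expansion_le[OF assms] N[rule_format, of L]]
    unfolding L_def double_sum_def by simp
  have rearrangement: "absv (double_sum - (\<Sum>n<L. S_coeff (z + y) x n * phi (x - of_nat n))) \<le> e"
    unfolding L_def double_sum_def by (rule absv_S_coeff_square_minus_triangle_le[OF assms N])
  have tail: "absv ((\<Sum>n<L. S_coeff (z + y) x n * phi (x - of_nat n)) - S_op absv (z + y) phi x) \<le> e"
    using order_trans[OF S_op_tail_le[OF Zp_add[OF assms(2,1)] assms(3,4)] N[rule_format, of L]]
    unfolding L_def by (simp add: absv_minus_commute)
  show "absv (S_op absv z (S_op absv y phi) x - S_op absv (z + y) phi x) \<le> e"
    using absv_diff_le_trans[OF outer absv_diff_le_trans[OF expansion
        absv_diff_le_trans[OF rearrangement tail]]] .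
qed

lemma S_op_uminus_S_op:
  assumes "y \<in> Zp absv" and "x \<in> Zp absv" and "\<forall>t\<in>Zp absv. absv (phi t) \<le> M"
  shows "S_op absv (- y) (S_op absv y phi) x = phi x"
  using S_op_S_op[OF assms(1) Zp_uminus[OF assms(1)] assms(2,3)] by (simp add: S_op_0)

lemma sup_norm_S_op:
  assumes "y \<in> Zp absv" and "cont_on_Zp absv phi"
  shows "sup_norm absv (S_op absv y phi) = sup_norm absv phi"
proof -
  obtain M where M: "\<forall>x\<in>Zp absv. absv (phi x) \<le> M"
    using cont_on_Zp_bounded[OF assms(2)] by blast
  have phi_le: "\<forall>x\<in>Zp absv. absv (phi x) \<le> sup_norm absv phi"
    using absv_le_sup_norm[OF M] by blast
  then have S_le: "\<forall>x\<in>Zp absv. absv (S_op absv y phi x) \<le> sup_norm absv phi"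
    using absv_S_op_le[OF assms(1)] by blast
  then have "\<forall>x\<in>Zp absv. absv (S_op absv y phi x) \<le> sup_norm absv (S_op absv y phi)"
    using absv_le_sup_norm by blast
  then have "\<forall>x\<in>Zp absv. absv (S_op absv (- y) (S_op absv y phi) x) \<le> sup_norm absv (S_op absv y phi)"
    using absv_S_op_le[OF Zp_uminus[OF assms(1)]] by blast
  moreover have "\<forall>x\<in>Zp absv. S_op absv (- y) (S_op absv y phi) x = phi x"
    using S_op_uminus_S_op[OF assms(1) _ M] by blast
  ultimately have "sup_norm absv phi \<le> sup_norm absv (S_op absv y phi)"
    by (simp add: sup_norm_le)
  moreover have "sup_norm absv (S_op absv y phi) \<le> sup_norm absv phi"
    using S_le by (rule sup_norm_le)
  ultimately show ?thesis
    by simp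
qed

end

theorem corollary6p4:
  fixes absv :: "'a::field_char_0 \<Rightarrow> real" and p :: nat and y :: 'a
  assumes Cp: "is_Cp p absv"
    and y: "y \<in> Zp absv"
  shows "(\<forall>phi. cont_on_Zp absv phi \<longrightarrow> cont_on_Zp absv (S_op absv y phi))
       \<and> (\<forall>phi psi a b. cont_on_Zp absv phi \<longrightarrow> cont_on_Zp absv psi \<longrightarrow>
            (\<forall>x\<in>Zp absv. S_op absv y (\<lambda>t. a * phi t + b * psi t) x
                          = a * S_op absv y phi x + b * S_op absv y psi x))
       \<and> (\<forall>phi. cont_on_Zp absv phi \<longrightarrow> sup_norm absv (S_op absv y phi) = sup_norm absv phi)
       \<and> (\<forall>phi. cont_on_Zp absv phi \<longrightarrow>
            (\<forall>x\<in>Zp absv. S_op absv (- y) (S_op absv y phi) x = phi x))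
       \<and> (\<forall>phi. cont_on_Zp absv phi \<longrightarrow>
            (\<forall>x\<in>Zp absv. S_op absv y (S_op absv (- y) phi) x = phi x))"
proof -
  interpret padic_complete_field absv p
    using Cp by unfold_locales (simp_all add: is_Cp_def)
  have inverse: "S_op absv (- z) (S_op absv z phi) x = phi x"
    if z: "z \<in> Zp absv" and phi: "cont_on_Zp absv phi" and x: "x \<in> Zp absv" for z phi x
  proof -
    obtain M where "\<forall>t\<in>Zp absv. absv (phi t) \<le> M"
      using cont_on_Zp_bounded[OF phi] by blast
    then show ?thesis
      by (rule S_op_uminus_S_op[OF z x])
  qed
  have linear: "S_op absv y (\<lambda>t. a * phi t + b * psi t) x = a * S_op absv y phi x + b * S_op absv y psi x"
    if phi: "cont_on_Zp absv phi" and psi: "cont_on_Zp absv psi" and x: "x \<in> Zp absv"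
    for phi psi a b x
  proof -
    obtain M M' where "\<forall>t\<in>Zp absv. absv (phi t) \<le> M" and "\<forall>t\<in>Zp absv. absv (psi t) \<le> M'"
      using cont_on_Zp_bounded[OF phi] cont_on_Zp_bounded[OF psi] by metis
    then show ?thesis
      by (rule S_op_linear[OF y x])
  qed
  show ?thesis
    using cont_on_Zp_S_op[OF y] sup_norm_S_op[OF y] linear inverse[OF y]
      inverse[OF Zp_uminus[OF y], unfolded minus_minus]
    by simp
qed

end
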